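(* Let $\mathcal{A}$ be a synchronizing automaton with Wedderburn–Artin components indexed by $[1,k]$ as in the context. Then $\mathrm{Fr}(\mathcal{A})\le\min\{\mathrm{Rnk}(\mathcal{I}_i): i\in[1,k]\}$. Moreover, if $\mathrm{Fs}(\mathcal{A})\setminus\mathrm{Rad}(\mathcal{A})\neq\emptyset$, then $\min\{\mathrm{Rnk}(\mathcal{I}_i): i\in[1,k]\}=\mathrm{Fr}(\mathcal{A})$.
   Context: Let $\mathcal{A}=\langle Q,\Sigma,\delta\rangle$ be a synchronizing automaton with state set $Q=\{q_1,\dots,q_n\}$ and finite alphabet $\Sigma$; write $q\cdot u$ for the action of $u\in\Sigma^*$, extended to subsets. A word $u$ is reset if $|Q\cdot u|=1$; $\mathrm{Syn}(\mathcal{A})$ is the set of reset words. The rank of a word is $\mathrm{rk}(u)=|Q\cdot u|$. Each word $u$ acts linearly on $\mathbb{C}Q$ by $q\mapsto q\cdot u$, preserving $w^\perp=\{x:\langle x,w\rangle=0\}$ with $w=q_1+\dots+q_n$; $u$ is reset iff it acts as $0$ on $w^\perp$. Let $\rho:\Sigma^*\to\mathbb{M}_{n-1}(\mathbb{C})\cong\mathrm{End}(w^\perp)$ be the induced representation, $\mathcal{R}$ the $\mathbb{C}$-algebra generated by $\rho(\Sigma^* )$, and $\mathrm{Rad}(\mathcal{A})=\rho^{-1}(\mathrm{Rad}(\mathcal{R}))$ the set of radical words (Jacobson radical). By Wedderburn–Artin, $\mathcal{R}/\mathrm{Rad}(\mathcal{R})\cong\mathbb{M}_{n_1}(\mathbb{C})\times\dots\times\mathbb{M}_{n_k}(\mathbb{C})$;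 let $\psi:\mathcal{R}\to\mathcal{R}/\mathrm{Rad}(\mathcal{R})$ be the quotient map, $\varphi_i$ the projection onto the $i$-th factor, and $\theta_i=\varphi_i\circ\psi\circ\rho:\Sigma^*\to\mathbb{M}_{n_i}(\mathbb{C})$, with $0_i$ the zero matrix. A word $u$ is radical iff $\theta_i(u)=0_i$ for all $i$. The monoid $\mathcal{M}_i=\theta_i(\Sigma^* )$ has a unique $0$-minimal ideal $\mathcal{I}_i$. For $g\in\mathcal{I}_i\setminus\{0_i\}$ put $\mathrm{Rnk}_i(g)=\min\{\mathrm{rk}(u):\theta_i(u)=g\}$ and $\mathrm{Rnk}(\mathcal{I}_i)=\min\{\mathrm{Rnk}_i(g): g\in\mathcal{I}_i\setminus\{0_i\}\}$. The former-rank is $\mathrm{Fr}(\mathcal{A})=\min\{|Q\cdot u|:u\in\Sigma^*\setminus\mathrm{Syn}(\mathcal{A})\}$ and the set of former-synchronizing words is $\mathrm{Fs}(\mathcal{A})=\{u\in\Sigma^*:|Q\cdot u|=\mathrm{Fr}(\mathcal{A})\}$. *)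

theory Defs
  imports Complex_Main "Jordan_Normal_Form.Matrix"
begin

text \<open>Automaton: states are 0..n-1, alphabet is a finite type, transition delta.
  Right action of a word: q . u.\<close>

definition act :: "(nat \<Rightarrow> 'a \<Rightarrow> nat) \<Rightarrow> nat \<Rightarrow> 'a list \<Rightarrow> nat" where
  "act \<delta> q u = foldl \<delta> q u"

definition rk :: "nat \<Rightarrow> (nat \<Rightarrow> 'a \<Rightarrow> nat) \<Rightarrow> 'a list \<Rightarrow> nat" where
  "rk n \<delta> u = card ((\<lambda>q. act \<delta> q u) ` {..<n})"

definition is_reset :: "nat \<Rightarrow> (nat \<Rightarrow> 'a \<Rightarrow> nat) \<Rightarrow> 'a list \<Rightarrow> bool" where
  "is_reset n \<delta> u \<longleftrightarrow> rk n \<delta> u = 1"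

definition synchronizing :: "nat \<Rightarrow> (nat \<Rightarrow> 'a \<Rightarrow> nat) \<Rightarrow> bool" where
  "synchronizing n \<delta> \<longleftrightarrow> (\<exists>u. is_reset n \<delta> u)"

definition Fr :: "nat \<Rightarrow> (nat \<Rightarrow> 'a \<Rightarrow> nat) \<Rightarrow> nat" where
  "Fr n \<delta> = Inf {rk n \<delta> u | u. \<not> is_reset n \<delta> u}"

definition Fs :: "nat \<Rightarrow> (nat \<Rightarrow> 'a \<Rightarrow> nat) \<Rightarrow> 'a list set" where
  "Fs n \<delta> = {u. rk n \<delta> u = Fr n \<delta>}"

text \<open>The representation rho on w-perp (w = q_0 + ... + q_(n-1)), written as an
  (n-1) x (n-1) matrix w.r.t. the basis b_j = q_j - q_(n-1), j < n-1,
  acting on column coordinate vectors: b_j is sent to q_j.u - q_(n-1).u.\<close>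
definition rho :: "nat \<Rightarrow> (nat \<Rightarrow> 'a \<Rightarrow> nat) \<Rightarrow> 'a list \<Rightarrow> complex mat" where
  "rho n \<delta> u = mat (n - 1) (n - 1)
     (\<lambda>(i, j). (if i = act \<delta> j u then 1 else 0) - (if i = act \<delta> (n - 1) u then 1 else 0))"

inductive_set alg_gen :: "nat \<Rightarrow> complex mat set \<Rightarrow> complex mat set"
  for d :: nat and S :: "complex mat set" where
  gen: "x \<in> S \<Longrightarrow> x \<in> alg_gen d S"
| one: "1\<^sub>m d \<in> alg_gen d S"
| zero: "0\<^sub>m d d \<in> alg_gen d S"
| add: "x \<in> alg_gen d S \<Longrightarrow> y \<in> alg_gen d S \<Longrightarrow> x + y \<in> alg_gen d S"
| mult: "x \<in> alg_gen d S \<Longrightarrow> y \<in> alg_gen d S \<Longrightarrow> x * y \<in> alg_gen d S"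
| smult: "x \<in> alg_gen d S \<Longrightarrow> c \<cdot>\<^sub>m x \<in> alg_gen d S"

definition Ralg :: "nat \<Rightarrow> (nat \<Rightarrow> 'a \<Rightarrow> nat) \<Rightarrow> complex mat set" where
  "Ralg n \<delta> = alg_gen (n - 1) (range (rho n \<delta>))"

definition jac_rad :: "nat \<Rightarrow> complex mat set \<Rightarrow> complex mat set" where
  "jac_rad d R = {x \<in> R. \<forall>y\<in>R. \<exists>z\<in>R. z * (1\<^sub>m d - y * x) = 1\<^sub>m d}"

definition Rad_words :: "nat \<Rightarrow> (nat \<Rightarrow> 'a \<Rightarrow> nat) \<Rightarrow> 'a list set" where
  "Rad_words n \<delta> = {u. rho n \<delta> u \<in> jac_rad (n - 1) (Ralg n \<delta>)}"

text \<open>A Wedderburn--Artin decomposition: the maps f i (i < k) are the components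
  phi_i o psi of a surjective unital C-algebra homomorphism
  R \<rightarrow> M_{ns 0}(C) x ... x M_{ns (k-1)}(C) whose kernel is Rad(R).\<close>
definition WA_decomp :: "nat \<Rightarrow> (nat \<Rightarrow> 'a \<Rightarrow> nat) \<Rightarrow> nat \<Rightarrow> (nat \<Rightarrow> nat)
    \<Rightarrow> (nat \<Rightarrow> complex mat \<Rightarrow> complex mat) \<Rightarrow> bool" where
  "WA_decomp n \<delta> k ns f \<longleftrightarrow>
    (let d = n - 1; R = Ralg n \<delta> in
      (\<forall>i<k. 0 < ns i) \<and>
      (\<forall>i<k. \<forall>x\<in>R. f i x \<in> carrier_mat (ns i) (ns i)) \<and>
      (\<forall>i<k. \<forall>x\<in>R. \<forall>y\<in>R. f i (x + y) = f i x + f i y \<and> f i (x * y) = f i x * f i y) \<and>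
      (\<forall>i<k. \<forall>c. \<forall>x\<in>R. f i (c \<cdot>\<^sub>m x) = c \<cdot>\<^sub>m f i x) \<and>
      (\<forall>i<k. f i (1\<^sub>m d) = 1\<^sub>m (ns i)) \<and>
      (\<forall>g. (\<forall>i<k. g i \<in> carrier_mat (ns i) (ns i)) \<longrightarrow> (\<exists>x\<in>R. \<forall>i<k. f i x = g i)) \<and>
      (\<forall>x\<in>R. (\<forall>i<k. f i x = 0\<^sub>m (ns i) (ns i)) \<longleftrightarrow> x \<in> jac_rad d R))"

definition theta :: "nat \<Rightarrow> (nat \<Rightarrow> 'a \<Rightarrow> nat) \<Rightarrow> (complex mat \<Rightarrow> complex mat)
    \<Rightarrow> 'a list \<Rightarrow> complex mat" where
  "theta n \<delta> fi u = fi (rho n \<delta> u)"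

definition Mon :: "nat \<Rightarrow> (nat \<Rightarrow> 'a \<Rightarrow> nat) \<Rightarrow> (complex mat \<Rightarrow> complex mat) \<Rightarrow> complex mat set" where
  "Mon n \<delta> fi = range (theta n \<delta> fi)"

definition monoid_ideal :: "complex mat set \<Rightarrow> complex mat set \<Rightarrow> bool" where
  "monoid_ideal M J \<longleftrightarrow> J \<subseteq> M \<and> J \<noteq> {} \<and> (\<forall>s\<in>M. \<forall>x\<in>J. s * x \<in> J \<and> x * s \<in> J)"

definition zero_minimal_ideal :: "complex mat set \<Rightarrow> complex mat \<Rightarrow> complex mat set \<Rightarrow> bool" where
  "zero_minimal_ideal M z I \<longleftrightarrow> monoid_ideal M I \<and> I \<noteq> {z} \<and>
     (\<forall>J. monoid_ideal M J \<and> J \<subseteq> I \<longrightarrow> J = {z} \<or> J = I)"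

definition Rnk_elem :: "nat \<Rightarrow> (nat \<Rightarrow> 'a \<Rightarrow> nat) \<Rightarrow> (complex mat \<Rightarrow> complex mat)
    \<Rightarrow> complex mat \<Rightarrow> nat" where
  "Rnk_elem n \<delta> fi g = Inf {rk n \<delta> u | u. theta n \<delta> fi u = g}"

definition Rnk_ideal :: "nat \<Rightarrow> (nat \<Rightarrow> 'a \<Rightarrow> nat) \<Rightarrow> (complex mat \<Rightarrow> complex mat)
    \<Rightarrow> nat \<Rightarrow> complex mat set \<Rightarrow> nat" where
  "Rnk_ideal n \<delta> fi m I = Inf {Rnk_elem n \<delta> fi g | g. g \<in> I - {0\<^sub>m m m}}"

end

theory Submission
  imports Defs
begin

text \<open>A reset word acts as zero on \<open>w\<^sup>\<bottom>\<close>, so a word whose image in some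
  component \<open>\<M>_{n_i}(\<complex>)\<close> is nonzero is not a reset word; this gives
  \<open>Fr \<le> Rnk(\<I>_i)\<close>. Conversely, let \<open>u\<close> be former-synchronizing but not radical, so
  \<open>\<theta>_i(u) \<noteq> 0\<close> for some \<open>i\<close>, and pick \<open>\<theta>_i(v) \<noteq> 0\<close> in \<open>\<I>_i\<close>. The matrix algebra
  is prime and is spanned by \<open>\<theta>_i(\<Sigma>\<^sup>*)\<close>, so \<open>\<theta>_i(u) \<theta>_i(x) \<theta>_i(v) \<noteq> 0\<close> for some
  word \<open>x\<close>; then \<open>v x u\<close> maps into \<open>\<I>_i \<setminus> {0}\<close> and has rank at most \<open>rk(u) = Fr\<close>.\<close>

lemma act_Nil [simp]: "act \<delta> q [] = q"
  by (simp add: act_def)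

lemma act_append: "act \<delta> q (u @ v) = act \<delta> (act \<delta> q u) v"
  by (simp add: act_def)

lemma act_less:
  assumes closed: "\<forall>q<n. \<forall>a. \<delta> q a < n" and "q < n"
  shows "act \<delta> q w < n"
  using assms(2) by (induction w arbitrary: q) (simp_all add: act_def closed)

lemma rk_append_le:
  assumes "\<forall>q<n. \<forall>a. \<delta> q a < n"
  shows "rk n \<delta> (p @ u) \<le> rk n \<delta> u"
proof -
  have "(\<lambda>q. act \<delta> q (p @ u)) ` {..<n} \<subseteq> (\<lambda>q. act \<delta> q u) ` {..<n}"
    using act_less[OF assms] by (auto simp: act_append)
  then show ?thesis unfolding rk_def by (intro card_mono) auto
qed

lemma Fr_le_rk: "\<not> is_reset n \<delta> u \<Longrightarrow> Fr n \<delta> \<le> rk n \<delta> u"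
  unfolding Fr_def by (rule cInf_lower) auto

lemma rho_carrier [simp]: "rho n \<delta> u \<in> carrier_mat (n - 1) (n - 1)"
  by (simp add: rho_def)

lemma rho_Nil: "rho n \<delta> [] = 1\<^sub>m (n - 1)"
  by (rule eq_matI) (auto simp: rho_def)

lemma rho_reset:
  assumes "is_reset n \<delta> u"
  shows "rho n \<delta> u = 0\<^sub>m (n - 1) (n - 1)"
proof -
  have "card ((\<lambda>q. act \<delta> q u) ` {..<n}) = 1"
    using assms by (simp add: is_reset_def rk_def)
  then obtain c where "(\<lambda>q. act \<delta> q u) ` {..<n} = {c}"
    by (meson card_1_singletonE)
  then have "\<And>q. q < n \<Longrightarrow> act \<delta> q u = c" by blast
  then show ?thesis by (intro eq_matI) (auto simp: rho_def)
qed

lemma sum_mult_indicator_upto_last: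
  fixes h :: "nat \<Rightarrow> 'b::comm_ring_1"
  assumes "c < n" "h (n - 1) = 0"
  shows "(\<Sum>m\<in>{0..<n - 1}. h m * (if m = c then 1 else 0)) = h c"
proof (cases "c < n - 1")
  case False
  then have "c = n - 1" using assms(1) by linarith
  then show ?thesis using assms(2) by simp
qed (simp add: if_distrib cong: if_cong)

text \<open>The matrix of \<open>q \<mapsto> q \<cdot> u\<close> acts on coordinate columns, so \<open>rho\<close> is an
  anti-homomorphism of the free monoid.\<close>
lemma rho_append:
  assumes closed: "\<forall>q<n. \<forall>a. \<delta> q a < n" and "1 \<le> n"
  shows "rho n \<delta> (u @ v) = rho n \<delta> v * rho n \<delta> u"
proof (rule eq_matI)
  fix i j assume "i < dim_row (rho n \<delta> v * rho n \<delta> u)" "j < dim_col (rho n \<delta> v * rho n \<delta> u)"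
  then have i: "i < n - 1" and j: "j < n - 1" by (auto simp: rho_def)
  define h :: "nat \<Rightarrow> complex" where
    "h m = (if i = act \<delta> m v then 1 else 0) - (if i = act \<delta> (n - 1) v then 1 else 0)" for m
  define a where "a = act \<delta> j u"
  define b where "b = act \<delta> (n - 1) u"
  have a: "a < n" and b: "b < n"
    using act_less[OF closed] j \<open>1 \<le> n\<close> by (auto simp: a_def b_def)
  have h_last: "h (n - 1) = 0" by (simp add: h_def)
  have "(rho n \<delta> v * rho n \<delta> u) $$ (i, j) =
      (\<Sum>m\<in>{0..<n - 1}. h m * ((if m = a then 1 else 0) - (if m = b then 1 else 0)))"
    using i j by (simp add: rho_def scalar_prod_def h_def a_def b_def)
  also have "\<dots> = (\<Sum>m\<in>{0..<n - 1}. h m * (if m = a then 1 else 0))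
      - (\<Sum>m\<in>{0..<n - 1}. h m * (if m = b then 1 else 0))"
    by (simp add: right_diff_distrib sum_subtractf)
  also have "\<dots> = h a - h b"
    using sum_mult_indicator_upto_last[of a n h, OF a h_last]
      sum_mult_indicator_upto_last[of b n h, OF b h_last]
    by simp
  also have "\<dots> = rho n \<delta> (u @ v) $$ (i, j)"
    using i j by (simp add: rho_def h_def a_def b_def act_append)
  finally show "rho n \<delta> (u @ v) $$ (i, j) = (rho n \<delta> v * rho n \<delta> u) $$ (i, j)" by simp
qed (auto simp: rho_def)

lemma alg_gen_carrier: "x \<in> alg_gen d S \<Longrightarrow> S \<subseteq> carrier_mat d d \<Longrightarrow> x \<in> carrier_mat d d"
  by (induction rule: alg_gen.induct) auto

lemma Ralg_carrier: "x \<in> Ralg n \<delta> \<Longrightarrow> x \<in> carrier_mat (n - 1) (n - 1)"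
  unfolding Ralg_def by (erule alg_gen_carrier) (auto simp: rho_def)

lemma rho_in_Ralg: "rho n \<delta> w \<in> Ralg n \<delta>"
  unfolding Ralg_def by (auto intro: alg_gen.gen)

inductive_set word_span :: "nat \<Rightarrow> (nat \<Rightarrow> 'a \<Rightarrow> nat) \<Rightarrow> complex mat set"
  for n :: nat and \<delta> :: "nat \<Rightarrow> 'a \<Rightarrow> nat" where
  rho: "rho n \<delta> w \<in> word_span n \<delta>"
| zero: "0\<^sub>m (n - 1) (n - 1) \<in> word_span n \<delta>"
| add: "x \<in> word_span n \<delta> \<Longrightarrow> y \<in> word_span n \<delta> \<Longrightarrow> x + y \<in> word_span n \<delta>"
| smult: "x \<in> word_span n \<delta> \<Longrightarrow> c \<cdot>\<^sub>m x \<in> word_span n \<delta>"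

lemma word_span_carrier: "x \<in> word_span n \<delta> \<Longrightarrow> x \<in> carrier_mat (n - 1) (n - 1)"
  by (induction rule: word_span.induct) (auto simp: rho_def)

lemma word_span_subset_Ralg: "x \<in> word_span n \<delta> \<Longrightarrow> x \<in> Ralg n \<delta>"
  unfolding Ralg_def by (induction rule: word_span.induct) (auto intro: alg_gen.intros)

lemma rho_mult_word_span:
  assumes "\<forall>q<n. \<forall>a. \<delta> q a < n" "1 \<le> n" "y \<in> word_span n \<delta>"
  shows "rho n \<delta> w * y \<in> word_span n \<delta>"
  using assms(3)
proof (induction rule: word_span.induct)
  case (rho w')
  then show ?case using rho_append[OF assms(1,2), of w' w] word_span.rho by metis
next
  case zero
  then show ?case using word_span.zero by (metis rho_carrier right_mult_zero_mat)
next
  case (add x y)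
  then show ?case using word_span.add word_span_carrier
    by (metis mult_add_distrib_mat rho_carrier)
next
  case (smult x c)
  then show ?case using word_span.smult word_span_carrier
    by (metis mult_smult_distrib rho_carrier)
qed

lemma word_span_mult:
  assumes "\<forall>q<n. \<forall>a. \<delta> q a < n" "1 \<le> n" "x \<in> word_span n \<delta>" "y \<in> word_span n \<delta>"
  shows "x * y \<in> word_span n \<delta>"
  using assms(3)
proof (induction rule: word_span.induct)
  case (rho w)
  then show ?case using rho_mult_word_span[OF assms(1,2,4)] .
next
  case zero
  then show ?case using word_span.zero word_span_carrier[OF assms(4)]
    by (metis left_mult_zero_mat)
next
  case (add x1 x2)
  then show ?case using word_span.add word_span_carrier[OF assms(4)] word_span_carrier
    by (metis add_mult_distrib_mat)
next
  case (smult x c)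
  then show ?case using word_span.smult word_span_carrier[OF assms(4)] word_span_carrier
    by (metis mult_smult_assoc_mat)
qed

lemma Ralg_subset_word_span:
  assumes "\<forall>q<n. \<forall>a. \<delta> q a < n" "1 \<le> n" "x \<in> Ralg n \<delta>"
  shows "x \<in> word_span n \<delta>"
  using assms(3) unfolding Ralg_def
proof (induction rule: alg_gen.induct)
  case one
  then show ?case using rho_Nil word_span.rho by metis
next
  case zero
  then show ?case by (rule word_span.zero)
qed (auto intro: word_span.intros word_span_mult[OF assms(1,2)])

lemma Ralg_span_induct [consumes 3, case_names rho zero add smult]:
  assumes "\<forall>q<n. \<forall>a. \<delta> q a < n" "1 \<le> n" "x \<in> Ralg n \<delta>"
    and "\<And>w. P (rho n \<delta> w)" "P (0\<^sub>m (n - 1) (n - 1))"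
    and "\<And>x y. x \<in> Ralg n \<delta> \<Longrightarrow> y \<in> Ralg n \<delta> \<Longrightarrow> P x \<Longrightarrow> P y \<Longrightarrow> P (x + y)"
    and "\<And>c x. x \<in> Ralg n \<delta> \<Longrightarrow> P x \<Longrightarrow> P (c \<cdot>\<^sub>m x)"
  shows "P x"
  using Ralg_subset_word_span[OF assms(1-3)]
  by (induction rule: word_span.induct) (blast intro: assms(4-7) word_span_subset_Ralg)+

lemma mat_nonzero_entry:
  assumes "A \<in> carrier_mat m m" "A \<noteq> 0\<^sub>m m m"
  obtains p q where "p < m" "q < m" "A $$ (p, q) \<noteq> 0"
  using assms by (metis carrier_matD eq_matI index_zero_mat(1-3))

text \<open>The full matrix algebra is prime; the witness is the matrix unit at the
  position linking a nonzero column of \<open>t\<close> to a nonzero row of \<open>a\<close>.\<close>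
lemma mat_mult_mult_nonzero:
  fixes t a :: "'a::semiring_1_no_zero_divisors mat"
  assumes t: "t \<in> carrier_mat m m" and a: "a \<in> carrier_mat m m"
    and "t \<noteq> 0\<^sub>m m m" "a \<noteq> 0\<^sub>m m m"
  shows "\<exists>X\<in>carrier_mat m m. t * X * a \<noteq> 0\<^sub>m m m"
proof -
  obtain p q where pq: "p < m" "q < m" "t $$ (p, q) \<noteq> 0"
    using mat_nonzero_entry[OF t] assms(3) by blast
  obtain r s where rs: "r < m" "s < m" "a $$ (r, s) \<noteq> 0"
    using mat_nonzero_entry[OF a] assms(4) by blast
  define X :: "'a mat" where "X = mat m m (\<lambda>(i, j). if i = q \<and> j = r then 1 else 0)"
  have X: "X \<in> carrier_mat m m" by (simp add: X_def)
  have tX: "(t * X) $$ (p, j) = (if j = r then t $$ (p, q) else 0)" if "j < m" for j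
  proof -
    have "(t * X) $$ (p, j) = (\<Sum>l\<in>{0..<m}. t $$ (p, l) * (if l = q \<and> j = r then 1 else 0))"
      using t pq that by (simp add: X_def scalar_prod_def)
    also have "\<dots> = (\<Sum>l\<in>{0..<m}. if l = q then (if j = r then t $$ (p, l) else 0) else 0)"
      by (rule sum.cong) auto
    finally show ?thesis using pq by (simp add: sum.delta')
  qed
  have "(t * X * a) $$ (p, s) = row (t * X) p \<bullet> col a s"
    using t X a pq rs by (intro index_mult_mat(1)) auto
  also have "\<dots> = (\<Sum>j\<in>{0..<m}. (t * X) $$ (p, j) * a $$ (j, s))"
    using t X a pq rs by (simp add: scalar_prod_def)
  also have "\<dots> = (\<Sum>j\<in>{0..<m}. if j = r then t $$ (p, q) * a $$ (r, s) else 0)"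
    by (rule sum.cong) (simp_all add: tX)
  also have "\<dots> = t $$ (p, q) * a $$ (r, s)"
    using rs by (simp add: sum.delta')
  finally have "(t * X * a) $$ (p, s) \<noteq> 0" using pq rs by simp
  then have "t * X * a \<noteq> 0\<^sub>m m m" using pq rs by (metis index_zero_mat(1))
  then show ?thesis using X by blast
qed

lemma Rnk_ideal_le_rk:
  assumes "theta n \<delta> fi w \<in> I" "theta n \<delta> fi w \<noteq> 0\<^sub>m m m"
  shows "Rnk_ideal n \<delta> fi m I \<le> rk n \<delta> w"
proof -
  have "Rnk_ideal n \<delta> fi m I \<le> Rnk_elem n \<delta> fi (theta n \<delta> fi w)"
    unfolding Rnk_ideal_def using assms by (intro cInf_lower) auto
  also have "\<dots> \<le> rk n \<delta> w"
    unfolding Rnk_elem_def by (rule cInf_lower) auto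
  finally show ?thesis .
qed

locale wedderburn_artin_automaton =
  fixes n :: nat and \<delta> :: "nat \<Rightarrow> 'a \<Rightarrow> nat" and k :: nat and ns :: "nat \<Rightarrow> nat"
    and f :: "nat \<Rightarrow> complex mat \<Rightarrow> complex mat"
  assumes two_le_n: "2 \<le> n"
    and closed: "\<forall>q<n. \<forall>a. \<delta> q a < n"
    and decomp: "WA_decomp n \<delta> k ns f"
begin

lemma component_carrier: "i < k \<Longrightarrow> x \<in> Ralg n \<delta> \<Longrightarrow> f i x \<in> carrier_mat (ns i) (ns i)"
  using decomp unfolding WA_decomp_def Let_def by blast

lemma component_add:
  "i < k \<Longrightarrow> x \<in> Ralg n \<delta> \<Longrightarrow> y \<in> Ralg n \<delta> \<Longrightarrow> f i (x + y) = f i x + f i y"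
  using decomp unfolding WA_decomp_def Let_def by blast

lemma component_mult:
  "i < k \<Longrightarrow> x \<in> Ralg n \<delta> \<Longrightarrow> y \<in> Ralg n \<delta> \<Longrightarrow> f i (x * y) = f i x * f i y"
  using decomp unfolding WA_decomp_def Let_def by blast

lemma component_smult: "i < k \<Longrightarrow> x \<in> Ralg n \<delta> \<Longrightarrow> f i (c \<cdot>\<^sub>m x) = c \<cdot>\<^sub>m f i x"
  using decomp unfolding WA_decomp_def Let_def by blast

lemma components_surj:
  "(\<And>i. i < k \<Longrightarrow> g i \<in> carrier_mat (ns i) (ns i)) \<Longrightarrow> \<exists>x\<in>Ralg n \<delta>. \<forall>i<k. f i x = g i"
  using decomp unfolding WA_decomp_def Let_def by blast

lemma components_zero_iff_jac_rad:
  "x \<in> Ralg n \<delta> \<Longrightarrow> (\<forall>i<k. f i x = 0\<^sub>m (ns i) (ns i)) \<longleftrightarrow> x \<in> jac_rad (n - 1) (Ralg n \<delta>)"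
  using decomp unfolding WA_decomp_def Let_def by blast

lemma zero_in_Ralg: "0\<^sub>m (n - 1) (n - 1) \<in> Ralg n \<delta>"
  unfolding Ralg_def by (rule alg_gen.zero)

lemma one_le_n: "1 \<le> n"
  using two_le_n by simp

lemma component_zero:
  assumes "i < k"
  shows "f i (0\<^sub>m (n - 1) (n - 1)) = 0\<^sub>m (ns i) (ns i)"
proof -
  have "f i (0\<^sub>m (n - 1) (n - 1)) = 0 \<cdot>\<^sub>m f i (0\<^sub>m (n - 1) (n - 1))"
    using component_smult[OF assms zero_in_Ralg, of 0] by simp
  also have "\<dots> = 0\<^sub>m (ns i) (ns i)"
    using component_carrier[OF assms zero_in_Ralg] by (intro eq_matI) auto
  finally show ?thesis .
qed

text \<open>Since \<open>n \<ge> 2\<close>, the algebra is nonzero, so its unit is not in the radical.\<close>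
lemma components_nonempty: "0 < k"
proof (rule ccontr)
  let ?d = "n - 1"
  assume "\<not> 0 < k"
  moreover have one: "1\<^sub>m ?d \<in> Ralg n \<delta>"
    unfolding Ralg_def by (rule alg_gen.one)
  ultimately have "1\<^sub>m ?d \<in> jac_rad ?d (Ralg n \<delta>)"
    using components_zero_iff_jac_rad by auto
  then obtain z where z: "z \<in> Ralg n \<delta>" "z * (1\<^sub>m ?d - 1\<^sub>m ?d * 1\<^sub>m ?d) = 1\<^sub>m ?d"
    unfolding jac_rad_def using one by blast
  have unit_diff: "1\<^sub>m ?d - 1\<^sub>m ?d * 1\<^sub>m ?d = (0\<^sub>m ?d ?d :: complex mat)"
    by (rule eq_matI) auto
  have "1\<^sub>m ?d = z * 0\<^sub>m ?d ?d"
    using z(2) by (simp only: unit_diff)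
  also have "\<dots> = 0\<^sub>m ?d ?d"
    by (rule right_mult_zero_mat[OF Ralg_carrier[OF z(1)]])
  finally have "(1\<^sub>m ?d :: complex mat) $$ (0, 0) = 0\<^sub>m ?d ?d $$ (0, 0)" by simp
  then show False using two_le_n by simp
qed

lemma theta_carrier: "i < k \<Longrightarrow> theta n \<delta> (f i) w \<in> carrier_mat (ns i) (ns i)"
  unfolding theta_def by (rule component_carrier[OF _ rho_in_Ralg])

lemma theta_append: "i < k \<Longrightarrow> theta n \<delta> (f i) (u @ v) = theta n \<delta> (f i) v * theta n \<delta> (f i) u"
  unfolding theta_def rho_append[OF closed one_le_n] by (simp add: component_mult rho_in_Ralg)

lemma theta_reset: "i < k \<Longrightarrow> is_reset n \<delta> w \<Longrightarrow> theta n \<delta> (f i) w = 0\<^sub>m (ns i) (ns i)"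
  unfolding theta_def by (simp only: rho_reset component_zero)

lemma theta_nonzero_if_not_jac_rad:
  assumes "rho n \<delta> u \<notin> jac_rad (n - 1) (Ralg n \<delta>)"
  obtains i where "i < k" "theta n \<delta> (f i) u \<noteq> 0\<^sub>m (ns i) (ns i)"
  using assms components_zero_iff_jac_rad[OF rho_in_Ralg] unfolding theta_def by blast

text \<open>Primeness of \<open>\<M>_{n_i}(\<complex>)\<close> transferred to the monoid \<open>\<theta>_i(\<Sigma>\<^sup>*)\<close>: the
  linear span of \<open>\<theta>_i(\<Sigma>\<^sup>*)\<close> is \<open>f_i(\<R>)\<close>, which is the whole matrix algebra.\<close>
lemma exists_theta_mult_mult_nonzero:
  assumes i: "i < k"
    and t: "t \<in> carrier_mat (ns i) (ns i)" "t \<noteq> 0\<^sub>m (ns i) (ns i)"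
    and a: "a \<in> carrier_mat (ns i) (ns i)" "a \<noteq> 0\<^sub>m (ns i) (ns i)"
  shows "\<exists>x. t * theta n \<delta> (f i) x * a \<noteq> 0\<^sub>m (ns i) (ns i)"
proof (rule ccontr)
  assume "\<not> ?thesis"
  then have words: "t * f i (rho n \<delta> x) * a = 0\<^sub>m (ns i) (ns i)" for x
    by (simp add: theta_def)
  have vanish: "t * f i r * a = 0\<^sub>m (ns i) (ns i)" if "r \<in> Ralg n \<delta>" for r
    using closed one_le_n that
  proof (induction rule: Ralg_span_induct)
    case (rho w)
    show ?case by (rule words)
  next
    case zero
    show ?case unfolding component_zero[OF i] using t a by simp
  next
    case (add x y)
    have fx: "f i x \<in> carrier_mat (ns i) (ns i)" and fy: "f i y \<in> carrier_mat (ns i) (ns i)"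
      using component_carrier[OF i] add(1,2) by auto
    have "t * f i (x + y) * a = (t * f i x + t * f i y) * a"
      using t fx fy by (simp add: component_add[OF i add(1,2)] mult_add_distrib_mat)
    also have "\<dots> = t * f i x * a + t * f i y * a"
      using t fx fy a by (simp add: add_mult_distrib_mat[of _ "ns i" "ns i"])
    finally show ?case using add(3,4) by simp
  next
    case (smult c x)
    have fx: "f i x \<in> carrier_mat (ns i) (ns i)"
      using component_carrier[OF i smult(1)] .
    have "t * f i (c \<cdot>\<^sub>m x) * a = c \<cdot>\<^sub>m (t * f i x * a)"
      using t fx a by (simp add: component_smult[OF i smult(1)] mult_smult_distrib[of _ "ns i" "ns i"]
          mult_smult_assoc_mat[of _ "ns i" "ns i"])
    then show ?case using smult(2) by simp
  qed
  obtain X where X: "X \<in> carrier_mat (ns i) (ns i)" "t * X * a \<noteq> 0\<^sub>m (ns i) (ns i)"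
    using mat_mult_mult_nonzero[OF t(1) a(1) t(2) a(2)] by blast
  have "\<exists>r\<in>Ralg n \<delta>. \<forall>j<k. f j r = (if j = i then X else 0\<^sub>m (ns j) (ns j))"
    using X(1) by (intro components_surj) auto
  then obtain r where "r \<in> Ralg n \<delta>" "f i r = X"
    using i by auto
  then show False using vanish X(2) by blast
qed

lemma Fr_le_Rnk_ideal:
  assumes i: "i < k" and I: "monoid_ideal (Mon n \<delta> (f i)) I" "I \<noteq> {0\<^sub>m (ns i) (ns i)}"
  shows "Fr n \<delta> \<le> Rnk_ideal n \<delta> (f i) (ns i) I"
proof -
  have "Fr n \<delta> \<le> Rnk_elem n \<delta> (f i) g" if g: "g \<in> I" "g \<noteq> 0\<^sub>m (ns i) (ns i)" for g
  proof -
    obtain w where "theta n \<delta> (f i) w = g"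
      using g(1) I(1) unfolding monoid_ideal_def Mon_def by blast
    moreover have "\<not> is_reset n \<delta> u" if "theta n \<delta> (f i) u = g" for u
      using that g(2) theta_reset[OF i] by auto
    ultimately show ?thesis
      unfolding Rnk_elem_def by (intro cInf_greatest) (auto intro: Fr_le_rk)
  qed
  moreover have "I - {0\<^sub>m (ns i) (ns i)} \<noteq> {}"
    using I unfolding monoid_ideal_def by blast
  ultimately show ?thesis
    unfolding Rnk_ideal_def by (intro cInf_greatest) auto
qed

lemma Rnk_ideal_le_Fr:
  assumes i: "i < k" and I: "monoid_ideal (Mon n \<delta> (f i)) I" "I \<noteq> {0\<^sub>m (ns i) (ns i)}"
    and u: "u \<in> Fs n \<delta>" "theta n \<delta> (f i) u \<noteq> 0\<^sub>m (ns i) (ns i)"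
  shows "Rnk_ideal n \<delta> (f i) (ns i) I \<le> Fr n \<delta>"
proof -
  let ?\<theta> = "theta n \<delta> (f i)"
  obtain a where a: "a \<in> I" "a \<noteq> 0\<^sub>m (ns i) (ns i)"
    using I unfolding monoid_ideal_def by blast
  then obtain v where v: "?\<theta> v = a"
    using I(1) unfolding monoid_ideal_def Mon_def by blast
  obtain x where x: "?\<theta> u * ?\<theta> x * a \<noteq> 0\<^sub>m (ns i) (ns i)"
    using exists_theta_mult_mult_nonzero[OF i theta_carrier[OF i] u(2) _ a(2)]
      theta_carrier[OF i] v by blast
  have assoc: "?\<theta> u * ?\<theta> x * a = ?\<theta> u * (?\<theta> x * a)"
    unfolding v[symmetric]
    by (rule assoc_mult_mat[OF theta_carrier[OF i] theta_carrier[OF i] theta_carrier[OF i]])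
  have "?\<theta> (v @ x @ u) = ?\<theta> u * (?\<theta> x * a)"
    using theta_append[OF i] v assoc by simp
  moreover have "?\<theta> u * (?\<theta> x * a) \<in> I"
    using I(1) a(1) unfolding monoid_ideal_def Mon_def by blast
  moreover have "?\<theta> u * (?\<theta> x * a) \<noteq> 0\<^sub>m (ns i) (ns i)"
    using x assoc by simp
  ultimately have "Rnk_ideal n \<delta> (f i) (ns i) I \<le> rk n \<delta> (v @ x @ u)"
    by (metis Rnk_ideal_le_rk)
  also have "\<dots> \<le> rk n \<delta> u"
    using rk_append_le[OF closed, of "v @ x" u] by simp
  finally show ?thesis
    using u(1) unfolding Fs_def by simp
qed

end

theorem mainTheorem2:
  fixes \<delta> :: "nat \<Rightarrow> 'a::finite \<Rightarrow> nat" and n k :: nat and ns :: "nat \<Rightarrow> nat"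
    and f :: "nat \<Rightarrow> complex mat \<Rightarrow> complex mat" and I :: "nat \<Rightarrow> complex mat set"
  assumes "2 \<le> n"
    and "\<forall>q<n. \<forall>a. \<delta> q a < n"
    and "synchronizing n \<delta>"
    and "WA_decomp n \<delta> k ns f"
    and "\<forall>i<k. zero_minimal_ideal (Mon n \<delta> (f i)) (0\<^sub>m (ns i) (ns i)) (I i)"
  shows "Fr n \<delta> \<le> Inf {Rnk_ideal n \<delta> (f i) (ns i) (I i) | i. i < k}
    \<and> (Fs n \<delta> - Rad_words n \<delta> \<noteq> {} \<longrightarrow>
         Inf {Rnk_ideal n \<delta> (f i) (ns i) (I i) | i. i < k} = Fr n \<delta>)"
proof -
  interpret wedderburn_artin_automaton n \<delta> k ns f
    using assms(1,2,4) by unfold_locales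
  let ?Rnks = "{Rnk_ideal n \<delta> (f i) (ns i) (I i) | i. i < k}"
  have ideal: "monoid_ideal (Mon n \<delta> (f i)) (I i)" "I i \<noteq> {0\<^sub>m (ns i) (ns i)}" if "i < k" for i
    using assms(5) that unfolding zero_minimal_ideal_def by auto
  have "Fr n \<delta> \<le> Inf ?Rnks"
    using components_nonempty Fr_le_Rnk_ideal[OF _ ideal] by (intro cInf_greatest) auto
  moreover have "Inf ?Rnks \<le> Fr n \<delta>" if nonradical: "Fs n \<delta> - Rad_words n \<delta> \<noteq> {}"
  proof -
    obtain u where u: "u \<in> Fs n \<delta>" "rho n \<delta> u \<notin> jac_rad (n - 1) (Ralg n \<delta>)"
      using nonradical unfolding Rad_words_def by blast
    obtain i where "i < k" "theta n \<delta> (f i) u \<noteq> 0\<^sub>m (ns i) (ns i)"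
      using theta_nonzero_if_not_jac_rad[OF u(2)] by blast
    then have "Rnk_ideal n \<delta> (f i) (ns i) (I i) \<le> Fr n \<delta>"
      using Rnk_ideal_le_Fr ideal u(1) by blast
    then show ?thesis
      using \<open>i < k\<close> by (intro cInf_lower2[of "Rnk_ideal n \<delta> (f i) (ns i) (I i)"]) auto
  qed
  ultimately show ?thesis by auto
qed

end
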